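(* Fix an integer $n\ge 2$, a real number $0<p<1$, and $\xi>0$ as described in the context. Let $f(\mathbf{x})=x_1^p+\cdots+x_n^p$. Suppose $\mathbf{e}=(e_1,\ldots,e_n)\in\mathbb{R}^n$ satisfies $e_1+\cdots+e_n=n(n-1)$, $e_1^2+\cdots+e_n^2\le (n-1)^4+(n-1)$, $\prod_{i=1}^n e_i\ge (n-1)^2$, $e_i\le (n-1)^2$ for $i=1,\ldots,n$, $e_i\ge \xi$ for $i=1,\ldots,n$. Then $f(\mathbf{e})\ge (n-1)^{2p}+n-1$.
   Context: $\xi>0$ is a fixed number chosen such that whenever a point $\mathbf{x}$ with $x_j\le (n-1)^2$ for all $j$ has $x_i=\xi$ for some $i$, then $\prod_{j=1}^n x_j<(n-1)^2$. *)

theory Defs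
  imports Complex_Main
begin

definition fp :: "nat \<Rightarrow> real \<Rightarrow> (nat \<Rightarrow> real) \<Rightarrow> real" where
  "fp n p x = (\<Sum>i=1..n. x i powr p)"

end

theory Submission
  imports Defs "HOL-Analysis.Analysis"
begin

text \<open>
  With \<open>M = (n - 1)\<^sup>2\<close> choose \<open>d\<close> so that
  \<open>g x = x\<^sup>p - (1 - p + d) - (p - d) x - d ln x\<close> vanishes at both \<open>x = 1\<close> and \<open>x = M\<close>.
  Then \<open>g \<ge> 0\<close> on \<open>(0, M]\<close>: we have \<open>g' x = k x / x\<close> with \<open>k x = p x\<^sup>p - (p - d) x - d\<close>;
  the choice forces \<open>d \<ge> p (1 - p)\<close>, which makes \<open>k \<le> 0\<close> on \<open>(0, 1]\<close>, and by concavity of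
  \<open>x\<^sup>p\<close> the function \<open>k\<close> changes sign at most once on \<open>[1, \<infinity>)\<close>, so on \<open>[1, M]\<close> the
  function \<open>g\<close> first increases and then decreases.  Summing \<open>g (e\<^sub>i) \<ge> 0\<close> and using
  \<open>\<Sum> e\<^sub>i = n (n - 1)\<close>, \<open>\<Sum> ln e\<^sub>i \<ge> ln M\<close> bounds \<open>f e\<close> below by the value of \<open>f\<close> at
  \<open>(M, 1, \<dots>, 1)\<close>.
\<close>

lemma powr_le_tangent_at_1:
  fixes p x :: real
  assumes "0 \<le> p" "p \<le> 1" "0 < x"
  shows "x powr p \<le> 1 - p + p * x"
  using Youngs_inequality_0[of p "1 - p" x 1] assms by (simp add: algebra_simps)

lemma powr_le_tangent:
  fixes p x z :: real
  assumes "0 \<le> p" "p \<le> 1" "0 < x" "0 < z"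
  shows "z powr p \<le> (1 - p) * x powr p + p * (x powr p / x) * z"
proof -
  have "x powr p * (z / x) powr p \<le> x powr p * (1 - p + p * (z / x))"
    using powr_le_tangent_at_1[of p "z / x"] assms by (intro mult_left_mono) auto
  moreover have "x powr p * (z / x) powr p = z powr p"
    using assms by (simp add: powr_divide)
  ultimately show ?thesis by (simp add: algebra_simps)
qed

lemma ln_less_minus_one:
  fixes x :: real
  assumes "1 < x"
  shows "ln x < x - 1"
proof -
  have "ln x = 2 * ln (sqrt x)"
    using assms by (simp add: ln_sqrt)
  also have "\<dots> \<le> 2 * (sqrt x - 1)"
    using assms ln_le_minus_one[of "sqrt x"] by simp
  also have "\<dots> < x - 1"
  proof -
    have "0 < (sqrt x - 1)\<^sup>2"
      using assms by simp
    then show ?thesis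
      using assms by (simp add: power2_diff)
  qed
  finally show ?thesis .
qed

lemma powr_tangent_gap_ge_ln_gap:
  fixes p M :: real
  assumes p: "0 < p" "p < 1" and M: "1 \<le> M"
  shows "p * (1 - p) * (M - 1 - ln M) \<le> 1 + p * (M - 1) - M powr p"
proof -
  define D where "D t = 1 + p * (t - 1) - t powr p - p * (1 - p) * (t - 1 - ln t)" for t :: real
  have "D 1 \<le> D M"
  proof (rule DERIV_nonneg_imp_nondecreasing[OF M])
    fix t :: real
    assume t: "1 \<le> t" "t \<le> M"
    have "DERIV D t :> p - p * (t powr p / t) - p * (1 - p) * (1 - 1 / t)"
      unfolding D_def using t
      by (auto intro!: derivative_eq_intros simp: field_simps powr_diff)
    moreover
    have "t powr p / t \<le> p + (1 - p) / t"
      using powr_le_tangent_at_1[of "1 - p" "1 / t"] p t by (simp add: powr_divide powr_diff)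
    then have "p * (t powr p / t) \<le> p * (p + (1 - p) / t)"
      using p by (intro mult_left_mono) auto
    then have "0 \<le> p - p * (t powr p / t) - p * (1 - p) * (1 - 1 / t)"
      by (simp add: algebra_simps diff_divide_distrib)
    ultimately show "\<exists>y. DERIV D t :> y \<and> 0 \<le> y" by blast
  qed
  then show ?thesis by (simp add: D_def)
qed

definition powr_ln_gap :: "real \<Rightarrow> real \<Rightarrow> real \<Rightarrow> real" where
  "powr_ln_gap p d x = x powr p - (1 - p + d) - (p - d) * x - d * ln x"

definition powr_ln_slope :: "real \<Rightarrow> real \<Rightarrow> real \<Rightarrow> real" where
  "powr_ln_slope p d x = p * x powr p - (p - d) * x - d"

lemma powr_ln_gap_1 [simp]: "powr_ln_gap p d 1 = 0"
  by (simp add: powr_ln_gap_def)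

lemma has_real_derivative_powr_ln_gap:
  assumes "0 < x"
  shows "(powr_ln_gap p d has_real_derivative powr_ln_slope p d x / x) (at x)"
proof -
  have "(powr_ln_gap p d has_real_derivative p * (x powr p / x) - (p - d) - d / x) (at x)"
    unfolding powr_ln_gap_def using assms
    by (auto intro!: derivative_eq_intros simp: field_simps powr_diff)
  moreover have "p * (x powr p / x) - (p - d) - d / x = powr_ln_slope p d x / x"
    unfolding powr_ln_slope_def using assms by (simp add: field_simps)
  ultimately show ?thesis by simp
qed

lemma powr_ln_slope_nonpos:
  assumes p: "0 < p" "p < 1" and d: "p * (1 - p) \<le> d" and x: "0 < x" "x \<le> 1"
  shows "powr_ln_slope p d x \<le> 0"
proof -
  have "p * x powr p \<le> p * (1 - p + p * x)"
    using powr_le_tangent_at_1[of p x] p x by (intro mult_left_mono) auto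
  moreover have "p * (1 - p) * (1 - x) \<le> d * (1 - x)"
    using d x by (intro mult_right_mono) auto
  ultimately show ?thesis
    unfolding powr_ln_slope_def by (simp add: algebra_simps)
qed

text \<open>Both sides compare \<open>x\<^sup>p\<close> at \<open>1\<close> and \<open>y\<close> with its tangent line at \<open>t\<close>.\<close>

lemma powr_ln_slope_chord:
  assumes p: "0 < p" "p < 1" and t: "1 \<le> t" "t \<le> y"
  shows "(t - 1) * powr_ln_slope p d y \<le> (y - 1) * powr_ln_slope p d t"
proof -
  define c where "c = p * (t powr p / t)"
  have "(y - t) * 1 \<le> (y - t) * ((1 - p) * t powr p + c * 1)"
    using powr_le_tangent[of p t 1] p t unfolding c_def by (intro mult_left_mono) auto
  moreover have "(t - 1) * y powr p \<le> (t - 1) * ((1 - p) * t powr p + c * y)"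
    using powr_le_tangent[of p t y] p t unfolding c_def by (intro mult_left_mono) auto
  moreover have "(y - t) * ((1 - p) * t powr p + c * 1) + (t - 1) * ((1 - p) * t powr p + c * y)
      = (y - 1) * t powr p"
  proof -
    have "c * t = p * t powr p"
      unfolding c_def using t by simp
    then show ?thesis
      by (simp add: algebra_simps)
  qed
  ultimately have "(y - t) + (t - 1) * y powr p \<le> (y - 1) * t powr p"
    by (simp only: mult_1_right)
  then have "p * ((y - t) + (t - 1) * y powr p) \<le> p * ((y - 1) * t powr p)"
    using p by (intro mult_left_mono) auto
  then show ?thesis
    unfolding powr_ln_slope_def by (simp add: algebra_simps)
qed

lemma powr_ln_slope_neg_mono:
  assumes p: "0 < p" "p < 1" and t: "1 \<le> t" "t \<le> y" and neg: "powr_ln_slope p d t < 0"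
  shows "powr_ln_slope p d y < 0"
proof (rule ccontr)
  assume "\<not> powr_ln_slope p d y < 0"
  then have "0 \<le> (t - 1) * powr_ln_slope p d y"
    using t by simp
  also have "\<dots> \<le> (y - 1) * powr_ln_slope p d t"
    using powr_ln_slope_chord[OF p t] .
  finally have "y = 1"
    using neg t by (smt (verit) mult_pos_neg)
  then show False
    using neg t by (simp add: powr_ln_slope_def)
qed

lemma powr_ln_gap_nonneg:
  assumes p: "0 < p" "p < 1" and d: "p * (1 - p) \<le> d"
    and root: "powr_ln_gap p d M = 0" and x: "0 < x" "x \<le> M"
  shows "0 \<le> powr_ln_gap p d x"
proof -
  note deriv = has_real_derivative_powr_ln_gap
  consider "x \<le> 1" | "1 \<le> x" "\<forall>t. 1 \<le> t \<and> t \<le> x \<longrightarrow> 0 \<le> powr_ln_slope p d t"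
    | t0 where "1 \<le> t0" "t0 \<le> x" "powr_ln_slope p d t0 < 0"
    by force
  then show ?thesis
  proof cases
    case 1
    have "powr_ln_gap p d 1 \<le> powr_ln_gap p d x"
    proof (rule DERIV_nonpos_imp_nonincreasing[OF 1])
      fix t assume "x \<le> t" "t \<le> 1"
      then show "\<exists>y. DERIV (powr_ln_gap p d) t :> y \<and> y \<le> 0"
        using deriv powr_ln_slope_nonpos[OF p d] x by (meson divide_nonpos_pos less_le_trans)
    qed
    then show ?thesis by simp
  next
    case 2
    have "powr_ln_gap p d 1 \<le> powr_ln_gap p d x"
    proof (rule DERIV_nonneg_imp_nondecreasing[OF 2(1)])
      fix t assume "1 \<le> t" "t \<le> x"
      then show "\<exists>y. DERIV (powr_ln_gap p d) t :> y \<and> 0 \<le> y"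
        using deriv 2(2) by (meson divide_nonneg_pos less_le_trans zero_less_one)
    qed
    then show ?thesis by simp
  next
    case 3
    have "powr_ln_gap p d M \<le> powr_ln_gap p d x"
    proof (rule DERIV_nonpos_imp_nonincreasing[OF x(2)])
      fix t assume "x \<le> t" "t \<le> M"
      then have "powr_ln_slope p d t < 0" and "0 < t"
        using powr_ln_slope_neg_mono[OF p, of t0 t] 3 by auto
      then show "\<exists>y. DERIV (powr_ln_gap p d) t :> y \<and> y \<le> 0"
        using deriv by (meson divide_nonpos_pos less_imp_le)
    qed
    then show ?thesis using root by simp
  qed
qed

lemma powr_ln_gap_root_exists:
  assumes p: "0 < p" "p < 1" and M: "1 < M"
  obtains d where "p * (1 - p) \<le> d" "powr_ln_gap p d M = 0"
proof
  define A where "A = 1 + p * (M - 1) - M powr p"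
  define B where "B = M - 1 - ln M"
  have B: "0 < B"
    unfolding B_def using ln_less_minus_one[OF M] by simp
  show "p * (1 - p) \<le> A / B"
    using powr_tangent_gap_ge_ln_gap[of p M] p M B
    unfolding A_def B_def by (simp add: pos_le_divide_eq)
  have "powr_ln_gap p d M = d * B - A" for d
    unfolding powr_ln_gap_def A_def B_def by (simp add: algebra_simps)
  then show "powr_ln_gap p (A / B) M = 0"
    using B by simp
qed

lemma sum_powr_ge_of_powr_ln_gap:
  fixes e :: "'a \<Rightarrow> real"
  assumes p: "0 < p" "p < 1" and d: "p * (1 - p) \<le> d" and root: "powr_ln_gap p d M = 0"
    and M: "1 \<le> M" and fin: "finite I"
    and e: "\<And>i. i \<in> I \<Longrightarrow> 0 < e i \<and> e i \<le> M" and prod: "M \<le> (\<Prod>i\<in>I. e i)"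
  shows "real (card I) * (1 - p + d) + (p - d) * (\<Sum>i\<in>I. e i) + d * ln M
           \<le> (\<Sum>i\<in>I. e i powr p)"
proof -
  have "0 \<le> (\<Sum>i\<in>I. powr_ln_gap p d (e i))"
    using powr_ln_gap_nonneg[OF p d root] e by (intro sum_nonneg) auto
  also have "\<dots> = (\<Sum>i\<in>I. e i powr p) - real (card I) * (1 - p + d)
                   - (p - d) * (\<Sum>i\<in>I. e i) - d * (\<Sum>i\<in>I. ln (e i))"
    by (simp add: powr_ln_gap_def sum_subtractf sum_distrib_left)
  also have "d * ln M \<le> d * (\<Sum>i\<in>I. ln (e i))"
  proof -
    have "ln M \<le> ln (\<Prod>i\<in>I. e i)"
      using prod M by simp
    also have "\<dots> = (\<Sum>i\<in>I. ln (e i))"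
      using e fin by (subst ln_prod) force+
    finally show ?thesis
      using d p by (intro mult_left_mono) (auto intro: order_trans[rotated])
  qed
  ultimately show ?thesis by linarith
qed

theorem theorem3p4:
  fixes n :: nat and p \<xi> :: real and e :: "nat \<Rightarrow> real"
  assumes n2: "n \<ge> 2"
    and p0: "0 < p" and p1: "p < 1"
    and xi_pos: "\<xi> > 0"
    and xi_prop: "\<And>x :: nat \<Rightarrow> real. (\<forall>j\<in>{1..n}. 0 < x j \<and> x j \<le> (real n - 1)^2) \<Longrightarrow>
                    (\<exists>i\<in>{1..n}. x i = \<xi>) \<Longrightarrow> (\<Prod>j=1..n. x j) < (real n - 1)^2"
    and sum1: "(\<Sum>i=1..n. e i) = real n * (real n - 1)"
    and sum2: "(\<Sum>i=1..n. (e i)^2) \<le> (real n - 1)^4 + (real n - 1)"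
    and prod: "(\<Prod>i=1..n. e i) \<ge> (real n - 1)^2"
    and upper: "\<forall>i\<in>{1..n}. e i \<le> (real n - 1)^2"
    and lower: "\<forall>i\<in>{1..n}. e i \<ge> \<xi>"
  shows "fp n p e \<ge> (real n - 1) powr (2 * p) + (real n - 1)"
proof (cases "n = 2")
  case True
  have "e 1 \<le> 1" "e 2 \<le> 1" "e 1 + e 2 = 2"
    using upper sum1 True by (auto simp: numeral_2_eq_2)
  then have "e 1 = 1" "e 2 = 1"
    by linarith+
  then show ?thesis
    using True by (simp add: fp_def numeral_2_eq_2)
next
  case False
  define M where "M = (real n - 1)^2"
  have M: "1 < M"
    using n2 False unfolding M_def by (simp add: power_less_one_iff one_less_power)
  obtain d where d: "p * (1 - p) \<le> d" "powr_ln_gap p d M = 0"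
    using powr_ln_gap_root_exists[OF p0 p1 M] .
  have "real n * (1 - p + d) + (p - d) * (real n * (real n - 1)) + d * ln M \<le> fp n p e"
    using sum_powr_ge_of_powr_ln_gap[OF p0 p1 d, of "{1..n}" e] M prod upper lower xi_pos sum1
    unfolding fp_def M_def by fastforce
  moreover have "(real n - 1) powr (2 * p) = M powr p"
    using n2 unfolding M_def by (simp add: powr_powr[symmetric] powr_realpow)
  moreover
  \<comment> \<open>the lower bound is \<open>f (M, 1, \<dots>, 1)\<close>, since \<open>M\<^sup>p = (1 - p + d) + (p - d) M + d ln M\<close>\<close>
  have "real n * (1 - p + d) + (p - d) * (real n * (real n - 1)) + d * ln M = M powr p + (real n - 1)"
    using d(2) unfolding powr_ln_gap_def M_def by (simp add: algebra_simps power2_eq_square)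
  ultimately show ?thesis by simp
qed

end
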